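(* Let $F$ be a finite field and let $\beta\in F((1/t))$ be algebraic of degree $d$ over $F(t)$. Then $\beta$ satisfies a Riccati equation $\beta'=a\beta^2+b\beta+c$ with $a,b,c\in F(t)$ if and only if, for every four distinct conjugates $\beta_1,\beta_2,\beta_3,\beta_4$ of $\beta$ over $F(t)$, the cross-ratio $\dfrac{(\beta_1-\beta_3)(\beta_2-\beta_4)}{(\beta_1-\beta_4)(\beta_2-\beta_3)}$ has derivative zero.
   Context: The derivative $'=d/dt$ on $F((1/t))$ is termwise differentiation; since $\beta$ is separable over $F(t)$, it extends uniquely to a derivation of the splitting field of $\beta$ over $F(t)$, and this extension is used for the conjugates of $\beta$. *)

theory Defs
  imports "HOL-Computational_Algebra.Computational_Algebra"
begin

text \<open>Model: F((1/t)) is the type of formal Laurent series \<open>'f fls\<close> in the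
variable X = 1/t (finitely many negative powers of X = finitely many positive
powers of t).\<close>

definition t_var :: "'f::field fls" where
  "t_var = fls_X_inv"

definition poly_t :: "'f::field poly \<Rightarrow> 'f fls" where
  "poly_t P = poly (map_poly fls_const P) t_var"

definition ratfun_t :: "'f::field fls set" where
  "ratfun_t = {poly_t P / poly_t Q | P Q. Q \<noteq> 0}"

text \<open>d/dt, termwise differentiation on F((1/t)). Since t = X^(-1),
d/dt = - X^2 d/dX.\<close>
definition deriv_t :: "'f::field fls \<Rightarrow> 'f fls" where
  "deriv_t f = - (fls_X ^ 2 * fls_deriv f)"

definition is_min_poly_t :: "'f::field fls poly \<Rightarrow> 'f fls \<Rightarrow> bool" where
  "is_min_poly_t p \<beta> \<longleftrightarrow>
     p \<noteq> 0 \<and> lead_coeff p = 1 \<and> (\<forall>i. coeff p i \<in> ratfun_t) \<and> poly p \<beta> = 0 \<and>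
     (\<forall>q. q \<noteq> 0 \<and> (\<forall>i. coeff q i \<in> ratfun_t) \<and> poly q \<beta> = 0 \<longrightarrow> degree p \<le> degree q)"

definition algebraic_of_degree_t :: "'f::field fls \<Rightarrow> nat \<Rightarrow> bool" where
  "algebraic_of_degree_t \<beta> d \<longleftrightarrow> (\<exists>p. is_min_poly_t p \<beta> \<and> degree p = d)"

definition ratfun_hom :: "('f::field fls \<Rightarrow> 'L::field) \<Rightarrow> bool" where
  "ratfun_hom \<phi> \<longleftrightarrow> \<phi> 0 = 0 \<and> \<phi> 1 = 1 \<and>
     (\<forall>x\<in>ratfun_t. \<forall>y\<in>ratfun_t. \<phi> (x + y) = \<phi> x + \<phi> y \<and> \<phi> (x * y) = \<phi> x * \<phi> y)"

definition splits :: "'L::field poly \<Rightarrow> bool" where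
  "splits q \<longleftrightarrow> (\<exists>c rs. q = smult c (\<Prod>r\<leftarrow>rs. [:- r, 1:]))"

definition subfield_generated :: "'L::field set \<Rightarrow> 'L set" where
  "subfield_generated S = \<Inter>{T. S \<subseteq> T \<and> 0 \<in> T \<and> 1 \<in> T \<and>
      (\<forall>x\<in>T. \<forall>y\<in>T. x + y \<in> T \<and> x * y \<in> T) \<and> (\<forall>x\<in>T. - x \<in> T \<and> inverse x \<in> T)}"

definition is_splitting_field_t :: "('f::field fls \<Rightarrow> 'L::field) \<Rightarrow> 'f fls poly \<Rightarrow> bool" where
  "is_splitting_field_t \<phi> p \<longleftrightarrow> ratfun_hom \<phi> \<and> splits (map_poly \<phi> p) \<and>
     subfield_generated (\<phi> ` ratfun_t \<union> {x. poly (map_poly \<phi> p) x = 0}) = UNIV"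

definition derivation_extending :: "('f::field fls \<Rightarrow> 'L::field) \<Rightarrow> ('L \<Rightarrow> 'L) \<Rightarrow> bool" where
  "derivation_extending \<phi> D \<longleftrightarrow>
     (\<forall>x y. D (x + y) = D x + D y) \<and> (\<forall>x y. D (x * y) = x * D y + D x * y) \<and>
     (\<forall>x\<in>ratfun_t. D (\<phi> x) = \<phi> (deriv_t x))"

definition cross_ratio :: "'L::field \<Rightarrow> 'L \<Rightarrow> 'L \<Rightarrow> 'L \<Rightarrow> 'L" where
  "cross_ratio b1 b2 b3 b4 = ((b1 - b3) * (b2 - b4)) / ((b1 - b4) * (b2 - b3))"

end

theory Submission
  imports Defs "HOL-Computational_Algebra.Field_as_Ring"
begin

(* Since F is perfect, every element of F(t) with derivative zero is a q-th power, q = char F.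
   This forces the minimal polynomial p of beta to be separable, so p' is invertible modulo p.
   Differentiating p(y) = 0 then shows that one polynomial w over F(t) with deg w < deg p
   computes y' = w(y) for every root y of p, for beta and for all of its conjugates alike.
   By minimality of p, beta satisfies a Riccati equation iff deg w <= 2.
   If three roots satisfy y' = Q(y) with deg Q <= 2, then the derivative of their cross-ratio
   with a fourth root y4 is a nonzero multiple of y4' - Q(y4). Taking for Q the quadratic
   interpolating D at three roots, all cross-ratios are constant iff w agrees with Q on the
   deg p distinct roots, i.e. iff deg w <= 2. *)

lemma poly_quadratic:
  fixes q :: "'a::comm_ring_1 poly"
  assumes "degree q \<le> 2"
  shows "poly q x = coeff q 2 * x^2 + coeff q 1 * x + coeff q 0"
proof -
  have "poly q x = (\<Sum>i\<le>degree q. coeff q i * x ^ i)"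
    by (simp add: poly_altdef)
  also have "\<dots> = (\<Sum>i\<le>2. coeff q i * x ^ i)"
    using assms by (intro sum.mono_neutral_left) (auto simp: coeff_eq_0)
  finally show ?thesis
    by (simp add: numeral_2_eq_2 algebra_simps)
qed

lemma quadratic_interpolation:
  fixes g1 g2 g3 :: "'a::field"
  assumes "distinct [g1, g2, g3]"
  obtains Q where "degree Q \<le> 2" "poly Q g1 = y1" "poly Q g2 = y2" "poly Q g3 = y3"
proof
  define c1 c2 c3 where "c1 = y1 / ((g1 - g2) * (g1 - g3))"
    and "c2 = y2 / ((g2 - g1) * (g2 - g3))" and "c3 = y3 / ((g3 - g1) * (g3 - g2))"
  define Q where "Q = smult c1 ([:-g2, 1:] * [:-g3, 1:])
     + smult c2 ([:-g1, 1:] * [:-g3, 1:]) + smult c3 ([:-g1, 1:] * [:-g2, 1:])"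
  have "degree ([:-a, 1:] * [:-b, 1:]) \<le> 2" for a b :: 'a
    using degree_mult_le[of "[:-a, 1:]" "[:-b, 1:]"] by simp
  then show "degree Q \<le> 2"
    unfolding Q_def by (intro degree_add_le order.trans[OF degree_smult_le])
  have Q: "poly Q x = c1 * ((x - g2) * (x - g3)) + c2 * ((x - g1) * (x - g3)) + c3 * ((x - g1) * (x - g2))"
    for x
    by (simp add: Q_def algebra_simps)
  have "g1 - g2 \<noteq> 0" "g1 - g3 \<noteq> 0" "g2 - g1 \<noteq> 0" "g2 - g3 \<noteq> 0" "g3 - g1 \<noteq> 0" "g3 - g2 \<noteq> 0"
    using assms by auto
  then show "poly Q g1 = y1" "poly Q g2 = y2" "poly Q g3 = y3"
    by (simp_all add: Q c1_def c2_def c3_def)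
qed

lemma coprime_imp_unit_mod:
  fixes p q :: "'a::euclidean_ring_gcd"
  assumes "coprime p q"
  obtains u where "p dvd u * q - 1"
proof
  have "fst (bezout_coefficients p q) * p + snd (bezout_coefficients p q) * q = 1"
    using bezout_coefficients_fst_snd[of p q] assms by (simp add: coprime_iff_gcd_eq_1)
  then have "snd (bezout_coefficients p q) * q - 1 = p * - fst (bezout_coefficients p q)"
    by (simp add: algebra_simps)
  then show "p dvd snd (bezout_coefficients p q) * q - 1"
    by (metis dvdI)
qed

lemma solve_congruence_with_unit_mod:
  fixes p q r :: "'a::field poly"
  assumes unit: "p dvd u * q - 1" and "0 < degree p"
  obtains w where "degree w < degree p" "p dvd q * w + r"
proof
  define w where "w = (- (r * u)) mod p"
  have "p \<noteq> 0"
    using assms(2) by auto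
  then show "degree w < degree p"
    using degree_mod_less[of p "- (r * u)"] assms(2) by (auto simp: w_def)
  obtain k where k: "u * q - 1 = p * k"
    using unit by blast
  have "w = - (r * u) - (- (r * u)) div p * p"
    using div_mult_mod_eq[of "- (r * u)" p] unfolding w_def by (metis add_diff_cancel_left')
  then have "q * w + r = p * (- (r * k) - q * ((- (r * u)) div p))"
    using k by algebra
  then show "p dvd q * w + r"
    by (metis dvdI)
qed

lemma pderiv_eq_0_coeff:
  fixes p :: "'a::idom poly"
  assumes "pderiv p = 0" and "\<not> CHAR('a) dvd i"
  shows "coeff p i = 0"
proof (cases i)
  case (Suc j)
  have "of_nat (Suc j) * coeff p (Suc j) = 0"
    using arg_cong[OF assms(1), of "\<lambda>p. coeff p j"] by (simp add: coeff_pderiv)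
  moreover have "of_nat (Suc j) \<noteq> (0::'a)"
    using assms(2) Suc by (simp only: of_nat_eq_0_iff_char_dvd) simp
  ultimately show ?thesis
    using Suc by simp
qed (use assms in simp)

lemma poly_eq_sum_monom_multiples:
  fixes p :: "'a::comm_ring_1 poly"
  assumes "q > 0" and "\<And>i. \<not> q dvd i \<Longrightarrow> coeff p i = 0"
  shows "p = (\<Sum>k\<le>degree p. monom (coeff p (q * k)) (q * k))"
proof (rule poly_eqI)
  fix j
  show "coeff p j = coeff (\<Sum>k\<le>degree p. monom (coeff p (q * k)) (q * k)) j"
  proof (cases "q dvd j")
    case True
    then obtain k0 where j: "j = q * k0"
      by blast
    have "coeff p j = (\<Sum>k\<le>degree p. if k = k0 then coeff p j else 0)"
    proof (cases "k0 \<le> degree p")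
      case False
      moreover have "k0 \<le> j"
        using assms(1) j by simp
      ultimately show ?thesis
        by (simp add: coeff_eq_0)
    qed simp
    also have "\<dots> = (\<Sum>k\<le>degree p. coeff (monom (coeff p (q * k)) (q * k)) j)"
      using assms(1) j by (intro sum.cong) (auto simp: coeff_monom)
    finally show ?thesis
      by (simp add: coeff_sum)
  next
    case False
    then show ?thesis
      using assms(2) by (auto simp: coeff_sum coeff_monom intro!: sum.neutral)
  qed
qed

lemma pderiv_eq_0_imp_CHAR_power:
  fixes p :: "'a::idom poly"
  assumes prime: "prime CHAR('a)" and "pderiv p = 0"
    and roots: "\<And>i. \<exists>r. coeff p i = r ^ CHAR('a)"
  obtains g where "p = g ^ CHAR('a)"
proof -
  define q where "q = CHAR('a)"
  obtain r where r: "\<And>i. coeff p i = r i ^ q"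
    using roots unfolding q_def by metis
  have "(\<Sum>k\<le>degree p. monom (r (q * k)) k) ^ q = (\<Sum>k\<le>degree p. monom (r (q * k)) k ^ q)"
    using prime by (intro freshmans_dream_sum) (simp_all add: q_def)
  also have "\<dots> = (\<Sum>k\<le>degree p. monom (coeff p (q * k)) (q * k))"
    by (simp add: monom_power r mult.commute)
  also have "\<dots> = p"
    using prime pderiv_eq_0_coeff[OF assms(2)]
    by (intro poly_eq_sum_monom_multiples[symmetric]) (simp_all add: q_def prime_gt_0_nat)
  finally show thesis
    using that unfolding q_def by metis
qed

lemma card_roots_of_splits:
  fixes q :: "'a::field poly"
  assumes "splits q" "q \<noteq> 0" and simple: "\<And>y. poly q y = 0 \<Longrightarrow> poly (pderiv q) y \<noteq> 0"
  shows "card {y. poly q y = 0} = degree q"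
proof -
  obtain c rs where q: "q = smult c (\<Prod>r\<leftarrow>rs. [:- r, 1:])"
    using assms(1) unfolding splits_def by blast
  have "c \<noteq> 0"
    using q assms(2) by auto
  have "poly (\<Prod>r\<leftarrow>rs. [:- r, 1:]) y = 0 \<longleftrightarrow> y \<in> set rs" for y
    by (induction rs) auto
  then have roots: "{y. poly q y = 0} = set rs"
    using \<open>c \<noteq> 0\<close> by (auto simp: q)
  have "degree (\<Prod>r\<leftarrow>rs. [:- r, 1:]) = length rs"
  proof (induction rs)
    case (Cons r rs)
    have "degree ([:- r, 1:] * (\<Prod>r\<leftarrow>rs. [:- r, 1:])) = 1 + degree (\<Prod>r\<leftarrow>rs. [:- r, 1:])"
      by (subst degree_mult_eq) (auto simp: prod_list_zero_iff)
    then show ?case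
      using Cons.IH by simp
  qed simp
  then have "degree q = length rs"
    using \<open>c \<noteq> 0\<close> by (simp add: q)
  moreover have "distinct rs"
  proof (rule ccontr)
    assume "\<not> distinct rs"
    then obtain xs ys zs r where "rs = xs @ [r] @ ys @ [r] @ zs"
      using not_distinct_decomp by blast
    then have double_root: "q = [:- r, 1:] * ([:- r, 1:] * smult c (\<Prod>r\<leftarrow>xs @ ys @ zs. [:- r, 1:]))"
      unfolding q by (simp add: algebra_simps)
    have "poly (pderiv q) r = 0"
      unfolding double_root pderiv_mult poly_add poly_mult by simp
    moreover have "poly q r = 0"
      using roots \<open>rs = _\<close> by auto
    ultimately show False
      using simple by blast
  qed
  ultimately show ?thesis
    by (simp add: roots distinct_card)
qed


section \<open>Derivations and cross-ratios\<close>

locale derivation =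
  fixes D :: "'a::idom \<Rightarrow> 'a"
  assumes additive: "D (x + y) = D x + D y"
    and leibniz: "D (x * y) = x * D y + D x * y"
begin

lemma zero [simp]: "D 0 = 0"
  using additive[of 0 0] by (simp only: add_0_right add_cancel_right_right)

lemma one [simp]: "D 1 = 0"
  using leibniz[of 1 1] by (simp only: mult_1_left mult_1_right add_cancel_right_right)

lemma minus: "D (- x) = - D x"
proof -
  have "D x + D (- x) = 0"
    using additive[of x "- x"] by simp
  then show ?thesis
    by (simp add: add_eq_0_iff)
qed

lemma diff: "D (x - y) = D x - D y"
  using additive[of x "- y"] by (simp add: minus)

lemma power: "D (x ^ Suc n) = of_nat (Suc n) * x ^ n * D x"
  by (induction n) (simp_all add: leibniz algebra_simps)

lemma poly_chain_rule: "D (poly q y) = poly (map_poly D q) y + poly (pderiv q) y * D y"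
  by (induction q) (simp_all add: additive leibniz map_poly_pCons pderiv_pCons algebra_simps)

end

locale field_derivation = derivation D for D :: "'a::field \<Rightarrow> 'a"
begin

lemma divide:
  assumes "y \<noteq> 0"
  shows "D (x / y) = (D x * y - x * D y) / y^2"
proof -
  have "0 = y * D (inverse y) + D y * inverse y"
    using leibniz[of y "inverse y"] assms by simp
  then have "D (inverse y) = - D y / y^2"
    using assms by (simp add: field_simps power2_eq_square)
      (metis add.commute add_eq_0_iff2 mult.commute)
  then show ?thesis
    using leibniz[of x "inverse y"] assms by (simp add: field_simps power2_eq_square)
qed

lemma cross_ratio_riccati:
  assumes "distinct [g1, g2, g3, g4]"
    and riccati: "\<And>g. g \<in> {g1, g2, g3} \<Longrightarrow> D g = A * g^2 + B * g + C"
  shows "D (cross_ratio g1 g2 g3 g4) =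
    (D g4 - (A * g4^2 + B * g4 + C)) * ((g1 - g3) * (g2 - g3) * (g2 - g1)) / ((g1 - g4) * (g2 - g3))^2"
proof -
  have nz: "(g1 - g4) * (g2 - g3) \<noteq> 0"
    using assms(1) by auto
  define e where "e = D g4 - (A * g4^2 + B * g4 + C)"
  have r4: "D g4 = A * g4^2 + B * g4 + C + e"
    by (simp add: e_def)
  have "D (cross_ratio g1 g2 g3 g4) =
    (((g1 - g3) * (D g2 - D g4) + (D g1 - D g3) * (g2 - g4)) * ((g1 - g4) * (g2 - g3))
     - (g1 - g3) * (g2 - g4) * ((g1 - g4) * (D g2 - D g3) + (D g1 - D g4) * (g2 - g3)))
     / ((g1 - g4) * (g2 - g3))^2"
    unfolding cross_ratio_def divide[OF nz] leibniz diff ..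
  also have "\<dots> = e * ((g1 - g3) * (g2 - g3) * (g2 - g1)) / ((g1 - g4) * (g2 - g3))^2"
    unfolding r4 riccati[of g1, simplified] riccati[of g2, simplified] riccati[of g3, simplified]
    by (rule arg_cong[where f = "\<lambda>x. x / _"]) (simp add: algebra_simps power2_eq_square)
  finally show ?thesis
    by (simp add: e_def)
qed

lemma cross_ratio_const_iff_riccati:
  assumes "distinct [g1, g2, g3, g4]"
    and "\<And>g. g \<in> {g1, g2, g3} \<Longrightarrow> D g = A * g^2 + B * g + C"
  shows "D (cross_ratio g1 g2 g3 g4) = 0 \<longleftrightarrow> D g4 = A * g4^2 + B * g4 + C"
  using cross_ratio_riccati[OF assms] assms(1) by auto

lemma cross_ratios_const_iff_degree_le_2:
  assumes "degree W < card R" and "\<And>y. y \<in> R \<Longrightarrow> D y = poly W y"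
  shows "(\<forall>g1 g2 g3 g4. g1 \<in> R \<and> g2 \<in> R \<and> g3 \<in> R \<and> g4 \<in> R \<and> distinct [g1, g2, g3, g4]
            \<longrightarrow> D (cross_ratio g1 g2 g3 g4) = 0) \<longleftrightarrow> degree W \<le> 2"
    (is "?const \<longleftrightarrow> _")
proof
  assume "degree W \<le> 2"
  then have "D y = coeff W 2 * y^2 + coeff W 1 * y + coeff W 0" if "y \<in> R" for y
    using assms(2)[OF that] poly_quadratic by metis
  then show ?const
    using cross_ratio_const_iff_riccati by (metis insert_iff empty_iff)
next
  assume const: ?const
  show "degree W \<le> 2"
  proof (cases "card R \<le> 3")
    case True
    then show ?thesis using assms(1) by simp
  next
    case False
    then obtain S where "S \<subseteq> R" "card S = 3"
      by (meson nat_le_linear obtain_subset_with_card_n)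
    then obtain g1 g2 g3 where g: "g1 \<in> R" "g2 \<in> R" "g3 \<in> R" and dist: "distinct [g1, g2, g3]"
      by (auto simp: card_3_iff)
    obtain Q where Q: "degree Q \<le> 2" "poly Q g1 = D g1" "poly Q g2 = D g2" "poly Q g3 = D g3"
      using quadratic_interpolation[OF dist] by metis
    have riccati: "D g = coeff Q 2 * g^2 + coeff Q 1 * g + coeff Q 0" if "g \<in> {g1, g2, g3}" for g
      using that Q poly_quadratic[OF Q(1)] by auto
    have "D y = poly Q y" if "y \<in> R" for y
    proof (cases "y \<in> {g1, g2, g3}")
      case True
      then show ?thesis using Q by auto
    next
      case False
      then have "distinct [g1, g2, g3, y]"
        using dist by auto
      then show ?thesis
        using const g that cross_ratio_const_iff_riccati[OF _ riccati] poly_quadratic[OF Q(1)]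
        by metis
    qed
    then have "W = Q"
      using assms False Q(1) by (intro poly_eqI_degree[of R]) auto
    then show ?thesis
      using Q(1) by simp
  qed
qed

end


locale comm_ring_hom =
  fixes h :: "'a::comm_ring_1 \<Rightarrow> 'b::comm_ring_1"
  assumes hom_zero [simp]: "h 0 = 0"
    and hom_one [simp]: "h 1 = 1"
    and hom_add: "h (x + y) = h x + h y"
    and hom_mult: "h (x * y) = h x * h y"
begin

lemma hom_uminus: "h (- x) = - h x"
proof -
  have "h x + h (- x) = 0"
    using hom_add[of x "- x"] by simp
  then show ?thesis
    by (simp add: add_eq_0_iff)
qed

lemma hom_diff: "h (x - y) = h x - h y"
  using hom_add[of x "- y"] by (simp add: hom_uminus)

lemma hom_power: "h (x ^ n) = h x ^ n"
  by (induction n) (simp_all add: hom_mult)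

lemma hom_of_nat: "h (of_nat n) = of_nat n"
  by (induction n) (simp_all add: hom_add)

lemma map_poly_add: "map_poly h (p + q) = map_poly h p + map_poly h q"
  by (rule poly_eqI) (simp add: coeff_map_poly hom_add)

lemma map_poly_diff: "map_poly h (p - q) = map_poly h p - map_poly h q"
  by (rule poly_eqI) (simp add: coeff_map_poly hom_diff)

lemma map_poly_mult: "map_poly h (p * q) = map_poly h p * map_poly h q"
proof (induction p)
  case (pCons c p)
  have "map_poly h (pCons c p * q) = map_poly h (smult c q + pCons 0 (p * q))"
    by simp
  also have "\<dots> = map_poly h (pCons c p) * map_poly h q"
    by (simp add: map_poly_add map_poly_smult map_poly_pCons hom_mult pCons.IH)
  finally show ?case .
qed simp

lemma map_poly_power: "map_poly h (p ^ n) = map_poly h p ^ n"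
  by (induction n) (simp_all add: map_poly_mult)

lemma nonzero_at_root_if_unit_mod:
  assumes "p dvd u * q - 1" and "poly (map_poly h p) y = 0"
  shows "poly (map_poly h q) y \<noteq> 0"
proof -
  obtain k where "u * q - 1 = p * k"
    using assms(1) by blast
  then have "poly (map_poly h (u * q - 1)) y = poly (map_poly h (p * k)) y"
    by simp
  then have "poly (map_poly h u) y * poly (map_poly h q) y - 1 = 0"
    using assms(2) by (simp add: map_poly_diff map_poly_mult)
  then show ?thesis
    by auto
qed

end

locale field_hom = comm_ring_hom h for h :: "'a::field \<Rightarrow> 'b::field"
begin

lemma hom_eq_0_iff [simp]: "h x = 0 \<longleftrightarrow> x = 0"
proof
  assume "h x = 0"
  then show "x = 0"
    using hom_mult[of x "inverse x"] by (cases "x = 0") simp_all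
qed simp

lemma degree_map_poly_hom [simp]: "degree (map_poly h p) = degree p"
  by (rule degree_map_poly) simp

lemma map_poly_hom_eq_0_iff [simp]: "map_poly h p = 0 \<longleftrightarrow> p = 0"
  by (rule map_poly_eq_0_iff) auto

lemma map_poly_pderiv: "map_poly h (pderiv p) = pderiv (map_poly h p)"
  by (rule poly_eqI) (simp add: coeff_map_poly coeff_pderiv hom_add hom_mult hom_of_nat)

lemma card_roots_map_poly_separable:
  assumes "splits (map_poly h p)" "p \<noteq> 0" and "p dvd u * pderiv p - 1"
  shows "card {y. poly (map_poly h p) y = 0} = degree p"
  using card_roots_of_splits[of "map_poly h p"] assms nonzero_at_root_if_unit_mod[OF assms(3)]
  by (simp add: map_poly_pderiv)

lemma CHAR_eq: "CHAR('b) = CHAR('a)"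
  by (rule CHAR_eqI) (simp_all flip: hom_of_nat add: of_nat_eq_0_iff_char_dvd)

end

section \<open>Minimal polynomials over a differential field\<close>

context field_hom
begin

definition minimal_poly :: "'a poly \<Rightarrow> 'b \<Rightarrow> bool" where
  "minimal_poly p x \<longleftrightarrow> lead_coeff p = 1 \<and> poly (map_poly h p) x = 0 \<and>
     (\<forall>q. q \<noteq> 0 \<and> poly (map_poly h q) x = 0 \<longrightarrow> degree p \<le> degree q)"

lemma minimal_polyD:
  assumes "minimal_poly p x"
  shows "p \<noteq> 0" "lead_coeff p = 1" "poly (map_poly h p) x = 0"
    "\<And>q. q \<noteq> 0 \<Longrightarrow> poly (map_poly h q) x = 0 \<Longrightarrow> degree p \<le> degree q"
  using assms by (auto simp: minimal_poly_def)

lemma minimal_poly_degree_pos: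
  assumes "minimal_poly p x"
  shows "0 < degree p"
proof (rule ccontr)
  assume "\<not> 0 < degree p"
  then have "p = 1"
    using minimal_polyD(2)[OF assms] by (metis degree_0_id gr0I one_pCons)
  then show False
    using minimal_polyD(3)[OF assms] by simp
qed

lemma minimal_poly_coprime_pderiv:
  assumes min: "minimal_poly p x" and "pderiv p \<noteq> 0"
  shows "coprime p (pderiv p)"
proof (rule coprimeI)
  fix c
  assume "c dvd p" "c dvd pderiv p"
  then obtain k where p: "p = c * k"
    by blast
  have "c \<noteq> 0" "k \<noteq> 0"
    using p minimal_polyD(1)[OF min] by auto
  have "degree (pderiv p) < degree p"
    using minimal_poly_degree_pos[OF min]
    by (intro le_less_trans[OF degree_le[of "degree p - 1"]]) (auto simp: coeff_pderiv coeff_eq_0)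
  then have "degree c < degree p"
    using dvd_imp_degree_le[OF \<open>c dvd pderiv p\<close> assms(2)] by simp
  then have "poly (map_poly h c) x \<noteq> 0"
    using minimal_polyD(4)[OF min \<open>c \<noteq> 0\<close>] by auto
  then have "poly (map_poly h k) x = 0"
    using minimal_polyD(3)[OF min] by (simp add: p map_poly_mult)
  then have "degree p \<le> degree k"
    by (rule minimal_polyD(4)[OF min \<open>k \<noteq> 0\<close>])
  then have "degree c = 0"
    using degree_mult_eq[OF \<open>c \<noteq> 0\<close> \<open>k \<noteq> 0\<close>] by (simp add: p)
  then show "is_unit c"
    using \<open>c \<noteq> 0\<close> by (simp add: is_unit_iff_degree)
qed

lemma minimal_poly_quadratic_iff:
  assumes min: "minimal_poly p x" and "degree w < degree p"
  shows "(\<exists>a\<in>range h. \<exists>b\<in>range h. \<exists>c\<in>range h. poly (map_poly h w) x = a * x^2 + b * x + c)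
    \<longleftrightarrow> degree w \<le> 2"
proof
  assume "degree w \<le> 2"
  then have "poly (map_poly h w) x = h (coeff w 2) * x^2 + h (coeff w 1) * x + h (coeff w 0)"
    using poly_quadratic[of "map_poly h w" x] by (simp add: coeff_map_poly)
  then show "\<exists>a\<in>range h. \<exists>b\<in>range h. \<exists>c\<in>range h. poly (map_poly h w) x = a * x^2 + b * x + c"
    by blast
next
  assume "\<exists>a\<in>range h. \<exists>b\<in>range h. \<exists>c\<in>range h. poly (map_poly h w) x = a * x^2 + b * x + c"
  then obtain a b c where "poly (map_poly h w) x = h a * x^2 + h b * x + h c"
    by blast
  then have "poly (map_poly h (w - [:c, b, a:])) x = 0"
    by (simp add: map_poly_diff map_poly_pCons algebra_simps power2_eq_square)
  then have "w = [:c, b, a:] \<or> degree p \<le> degree (w - [:c, b, a:])"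
    using minimal_polyD(4)[OF min] by (metis eq_iff_diff_eq_0)
  moreover have "degree [:c, b, a:] \<le> 2"
    by (simp add: degree_pCons_le)
  ultimately show "degree w \<le> 2"
    using degree_diff_le_max[of w "[:c, b, a:]"] assms(2) by auto
qed

end

locale differential_field_hom = field_hom h + source: field_derivation \<delta> + target: field_derivation D
  for h :: "'a::field \<Rightarrow> 'b::field" and \<delta> :: "'a \<Rightarrow> 'a" and D :: "'b \<Rightarrow> 'b" +
  assumes derivation_commutes: "D (h c) = h (\<delta> c)"
begin

lemma map_poly_derivation_commutes: "map_poly D (map_poly h p) = map_poly h (map_poly \<delta> p)"
  by (simp add: map_poly_map_poly o_def derivation_commutes)

lemma derivative_at_root:
  assumes unit: "p dvd u * pderiv p - 1" and "p dvd pderiv p * w + map_poly \<delta> p"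
    and root: "poly (map_poly h p) y = 0"
  shows "D y = poly (map_poly h w) y"
proof -
  obtain k where "pderiv p * w + map_poly \<delta> p = p * k"
    using assms(2) by blast
  then have "poly (map_poly h (pderiv p * w + map_poly \<delta> p)) y = poly (map_poly h (p * k)) y"
    by simp
  then have "poly (map_poly h (pderiv p)) y * poly (map_poly h w) y + poly (map_poly h (map_poly \<delta> p)) y = 0"
    using root by (simp add: map_poly_add map_poly_mult)
  moreover have "poly (map_poly h (pderiv p)) y * D y + poly (map_poly h (map_poly \<delta> p)) y = 0"
    using target.poly_chain_rule[of "map_poly h p" y] root
    by (simp add: map_poly_derivation_commutes map_poly_pderiv algebra_simps)
  moreover have "poly (map_poly h (pderiv p)) y \<noteq> 0"
    by (rule nonzero_at_root_if_unit_mod[OF unit root])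
  ultimately show ?thesis
    by (metis add_right_cancel mult_left_cancel)
qed

lemma minimal_poly_pderiv_eq_0_imp_constant_coeffs:
  assumes min: "minimal_poly p x" and "pderiv p = 0"
  shows "map_poly \<delta> p = 0"
proof (rule ccontr)
  assume nz: "map_poly \<delta> p \<noteq> 0"
  have "poly (map_poly h (map_poly \<delta> p)) x = 0"
    using target.poly_chain_rule[of "map_poly h p" x] minimal_polyD(3)[OF min] assms(2)
    by (simp add: map_poly_derivation_commutes flip: map_poly_pderiv)
  then have "degree p \<le> degree (map_poly \<delta> p)"
    by (rule minimal_polyD(4)[OF min nz])
  moreover have "degree (map_poly \<delta> p) < degree p"
    using nz minimal_polyD(2)[OF min]
    by (intro degree_lessI) (auto simp: coeff_map_poly coeff_eq_0 le_less)
  ultimately show False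
    by simp
qed

lemma minimal_poly_pderiv_nonzero:
  assumes min: "minimal_poly p x" and prime: "prime CHAR('a)"
    and constants_are_powers: "\<And>c. \<delta> c = 0 \<Longrightarrow> \<exists>e. c = e ^ CHAR('a)"
  shows "pderiv p \<noteq> 0"
proof
  assume "pderiv p = 0"
  have "\<delta> (coeff p i) = 0" for i
    using minimal_poly_pderiv_eq_0_imp_constant_coeffs[OF min \<open>pderiv p = 0\<close>]
    by (metis coeff_0 coeff_map_poly source.zero)
  then obtain g where p: "p = g ^ CHAR('a)"
    using pderiv_eq_0_imp_CHAR_power[OF prime \<open>pderiv p = 0\<close>] constants_are_powers by metis
  have "CHAR('a) > 1"
    using prime prime_gt_1_nat by blast
  then have "g \<noteq> 0"
    using p minimal_polyD(1)[OF min] by auto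
  have "poly (map_poly h g) x ^ CHAR('a) = 0"
    using minimal_polyD(3)[OF min] by (simp add: p map_poly_power)
  then have "degree p \<le> degree g"
    using minimal_polyD(4)[OF min \<open>g \<noteq> 0\<close>] by simp
  moreover have "degree p = CHAR('a) * degree g"
    by (simp add: p degree_power_eq \<open>g \<noteq> 0\<close>)
  ultimately show False
    using minimal_poly_degree_pos[OF min] \<open>CHAR('a) > 1\<close> by simp
qed

end

section \<open>The field F(t) inside F((1/t))\<close>

interpretation fls_const: field_hom "fls_const :: 'a::field \<Rightarrow> 'a fls"
  by unfold_locales (simp_all add: fls_plus_const)

interpretation poly_t: comm_ring_hom "poly_t :: 'a::field poly \<Rightarrow> 'a fls"
  by unfold_locales (simp_all add: poly_t_def fls_const.map_poly_add fls_const.map_poly_mult)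

interpretation deriv_t: field_derivation "deriv_t :: 'a::field fls \<Rightarrow> 'a fls"
  by unfold_locales (simp_all add: deriv_t_def algebra_simps)

lemma fls_nth_poly_t: "fls_nth (poly_t P) (- int k) = coeff P k"
proof -
  have "poly_t P = (\<Sum>i\<le>degree P. fls_const (coeff P i) * fls_X_inv ^ i)"
    unfolding poly_t_def t_var_def poly_altdef by (simp add: coeff_map_poly)
  then have "fls_nth (poly_t P) (- int k) = (\<Sum>i\<le>degree P. coeff P i * (if k = i then 1 else 0))"
    by (simp add: fls_nth_sum)
  also have "\<dots> = (\<Sum>i\<le>degree P. if i = k then coeff P i else 0)"
    by (intro sum.cong) auto
  also have "\<dots> = coeff P k"
    by (auto simp: coeff_eq_0)
  finally show ?thesis .
qed

lemma poly_t_eq_0_iff [simp]: "poly_t P = 0 \<longleftrightarrow> P = 0"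
  by (metis fls_nth_poly_t fls_zero_nth poly_eqI coeff_0 poly_t.hom_zero)

lemma deriv_t_poly_t: "deriv_t (poly_t P) = poly_t (pderiv P)"
proof -
  have "fls_X * (fls_X_inv :: 'a fls) = 1"
    by (simp add: fls_X_inv_times_conv_shift)
  then have "deriv_t (t_var :: 'a fls) = 1"
    by (simp add: deriv_t_def t_var_def power2_eq_square algebra_simps)
  moreover have "map_poly deriv_t (map_poly fls_const P) = 0"
    by (rule poly_eqI) (simp add: coeff_map_poly deriv_t_def)
  ultimately show ?thesis
    using deriv_t.poly_chain_rule[of "map_poly fls_const P" t_var]
    by (simp add: poly_t_def fls_const.map_poly_pderiv)
qed

lemma ratfun_tI: "Q \<noteq> 0 \<Longrightarrow> poly_t P / poly_t Q \<in> ratfun_t"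
  by (auto simp: ratfun_t_def)

lemma ratfun_tE:
  assumes "x \<in> ratfun_t"
  obtains P Q where "Q \<noteq> 0" "x = poly_t P / poly_t Q"
  using assms by (auto simp: ratfun_t_def)

lemma poly_t_in_ratfun_t: "poly_t P \<in> ratfun_t"
  using ratfun_tI[of 1 P] by simp

lemma ratfun_t_add:
  assumes "x \<in> ratfun_t" "y \<in> ratfun_t"
  shows "x + y \<in> ratfun_t"
proof -
  obtain P1 Q1 P2 Q2 where "Q1 \<noteq> 0" "Q2 \<noteq> 0" "x = poly_t P1 / poly_t Q1" "y = poly_t P2 / poly_t Q2"
    using assms by (metis ratfun_tE)
  then have "x + y = poly_t (P1 * Q2 + P2 * Q1) / poly_t (Q1 * Q2)"
    by (simp add: poly_t.hom_add poly_t.hom_mult field_simps)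
  then show ?thesis
    using \<open>Q1 \<noteq> 0\<close> \<open>Q2 \<noteq> 0\<close> by (simp add: ratfun_tI)
qed

lemma ratfun_t_mult:
  assumes "x \<in> ratfun_t" "y \<in> ratfun_t"
  shows "x * y \<in> ratfun_t"
proof -
  obtain P1 Q1 P2 Q2 where "Q1 \<noteq> 0" "Q2 \<noteq> 0" "x = poly_t P1 / poly_t Q1" "y = poly_t P2 / poly_t Q2"
    using assms by (metis ratfun_tE)
  then have "x * y = poly_t (P1 * P2) / poly_t (Q1 * Q2)"
    by (simp add: poly_t.hom_mult)
  then show ?thesis
    using \<open>Q1 \<noteq> 0\<close> \<open>Q2 \<noteq> 0\<close> by (simp add: ratfun_tI)
qed

lemma ratfun_t_uminus:
  assumes "x \<in> ratfun_t"
  shows "- x \<in> ratfun_t"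
proof -
  obtain P Q where "Q \<noteq> 0" "x = poly_t P / poly_t Q"
    using assms by (rule ratfun_tE)
  then show ?thesis
    using ratfun_tI[of Q "- P"] by (simp add: poly_t.hom_uminus)
qed

lemma ratfun_t_inverse:
  assumes "x \<in> ratfun_t"
  shows "inverse x \<in> ratfun_t"
proof -
  obtain P Q where "Q \<noteq> 0" "x = poly_t P / poly_t Q"
    using assms by (rule ratfun_tE)
  then show ?thesis
    using ratfun_tI[of P Q] ratfun_tI[of 1 0] by (cases "P = 0") simp_all
qed

lemma ratfun_t_diff: "x \<in> ratfun_t \<Longrightarrow> y \<in> ratfun_t \<Longrightarrow> x - y \<in> ratfun_t"
  using ratfun_t_add[of x "- y"] ratfun_t_uminus[of y] by simp

lemma ratfun_t_divide: "x \<in> ratfun_t \<Longrightarrow> y \<in> ratfun_t \<Longrightarrow> x / y \<in> ratfun_t"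
  using ratfun_t_mult[of x "inverse y"] ratfun_t_inverse[of y] by (simp add: divide_inverse)

lemma ratfun_t_deriv_t:
  assumes "x \<in> ratfun_t"
  shows "deriv_t x \<in> ratfun_t"
proof -
  obtain P Q where "Q \<noteq> 0" and x: "x = poly_t P / poly_t Q"
    using assms by (rule ratfun_tE)
  then have "deriv_t x = poly_t (pderiv P * Q - P * pderiv Q) / poly_t (Q^2)"
    by (simp add: deriv_t.divide deriv_t_poly_t poly_t.hom_diff poly_t.hom_mult poly_t.hom_power)
  then show ?thesis
    using \<open>Q \<noteq> 0\<close> by (simp add: ratfun_tI)
qed

(* F(t) as a type of its own, so that F(t)[x] is a Euclidean ring with Bezout coefficients. *)
typedef (overloaded) ('f::field) ratfun = "ratfun_t :: 'f fls set"
  morphisms rep_ratfun abs_ratfun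
  using poly_t_in_ratfun_t by blast

setup_lifting type_definition_ratfun

instantiation ratfun :: (field) field
begin
lift_definition zero_ratfun :: "'a ratfun" is 0
  using poly_t_in_ratfun_t[of 0] by simp
lift_definition one_ratfun :: "'a ratfun" is 1
  using poly_t_in_ratfun_t[of 1] by simp
lift_definition plus_ratfun :: "'a ratfun \<Rightarrow> 'a ratfun \<Rightarrow> 'a ratfun" is "(+)"
  by (rule ratfun_t_add)
lift_definition minus_ratfun :: "'a ratfun \<Rightarrow> 'a ratfun \<Rightarrow> 'a ratfun" is "(-)"
  by (rule ratfun_t_diff)
lift_definition uminus_ratfun :: "'a ratfun \<Rightarrow> 'a ratfun" is uminus
  by (rule ratfun_t_uminus)
lift_definition times_ratfun :: "'a ratfun \<Rightarrow> 'a ratfun \<Rightarrow> 'a ratfun" is "(*)"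
  by (rule ratfun_t_mult)
lift_definition inverse_ratfun :: "'a ratfun \<Rightarrow> 'a ratfun" is inverse
  by (rule ratfun_t_inverse)
lift_definition divide_ratfun :: "'a ratfun \<Rightarrow> 'a ratfun \<Rightarrow> 'a ratfun" is "(/)"
  by (rule ratfun_t_divide)
instance
  by standard (transfer; simp add: algebra_simps divide_inverse)+
end

instantiation ratfun :: (field)
  "{unique_euclidean_ring, normalization_euclidean_semiring, normalization_semidom_multiplicative}"
begin
definition [simp]: "normalize_ratfun = (normalize_field :: 'a ratfun \<Rightarrow> _)"
definition [simp]: "unit_factor_ratfun = (unit_factor_field :: 'a ratfun \<Rightarrow> _)"
definition [simp]: "modulo_ratfun = (mod_field :: 'a ratfun \<Rightarrow> _)"
definition [simp]: "euclidean_size_ratfun = (euclidean_size_field :: 'a ratfun \<Rightarrow> _)"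
definition [simp]: "division_segment (x :: 'a ratfun) = 1"
instance
  by standard (simp_all add: dvd_field_iff field_split_simps split: if_splits)
end

instantiation ratfun :: (field) euclidean_ring_gcd
begin
definition gcd_ratfun :: "'a ratfun \<Rightarrow> 'a ratfun \<Rightarrow> 'a ratfun" where
  "gcd_ratfun = Euclidean_Algorithm.gcd"
definition lcm_ratfun :: "'a ratfun \<Rightarrow> 'a ratfun \<Rightarrow> 'a ratfun" where
  "lcm_ratfun = Euclidean_Algorithm.lcm"
definition Gcd_ratfun :: "'a ratfun set \<Rightarrow> 'a ratfun" where
  "Gcd_ratfun = Euclidean_Algorithm.Gcd"
definition Lcm_ratfun :: "'a ratfun set \<Rightarrow> 'a ratfun" where
  "Lcm_ratfun = Euclidean_Algorithm.Lcm"
instance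
  by standard (simp_all add: gcd_ratfun_def lcm_ratfun_def Gcd_ratfun_def Lcm_ratfun_def)
end

instance ratfun :: (field) field_gcd ..

lift_definition deriv_ratfun :: "'f::field ratfun \<Rightarrow> 'f ratfun" is deriv_t
  by (rule ratfun_t_deriv_t)

interpretation rep_ratfun: differential_field_hom rep_ratfun deriv_ratfun deriv_t
proof unfold_locales
  fix x y :: "'a ratfun"
  show "rep_ratfun 0 = 0" "rep_ratfun 1 = 1" "rep_ratfun (x + y) = rep_ratfun x + rep_ratfun y"
    "rep_ratfun (x * y) = rep_ratfun x * rep_ratfun y"
    by (simp_all add: zero_ratfun.rep_eq one_ratfun.rep_eq plus_ratfun.rep_eq times_ratfun.rep_eq)
  show "deriv_ratfun (x + y) = deriv_ratfun x + deriv_ratfun y"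
    "deriv_ratfun (x * y) = x * deriv_ratfun y + deriv_ratfun x * y"
    by (transfer; simp add: deriv_t.additive deriv_t.leibniz)+
  show "deriv_t (rep_ratfun x) = rep_ratfun (deriv_ratfun x)"
    by (simp add: deriv_ratfun.rep_eq)
qed

lemma range_rep_ratfun: "range rep_ratfun = ratfun_t"
  by (rule type_definition.Rep_range[OF type_definition_ratfun])

lemma is_min_poly_t_imp_minimal_poly:
  assumes "is_min_poly_t p \<beta>"
  obtains p0 where "p = map_poly rep_ratfun p0" and "rep_ratfun.minimal_poly p0 \<beta>"
proof
  have coeffs: "coeff p i \<in> ratfun_t" for i
    using assms by (simp add: is_min_poly_t_def)
  define p0 where "p0 = map_poly abs_ratfun p"
  have abs_ratfun_zero: "abs_ratfun 0 = 0"
    by (metis rep_ratfun.hom_zero rep_ratfun_inverse)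
  have "map_poly (rep_ratfun \<circ> abs_ratfun) p = p"
    by (rule map_poly_idI) (metis abs_ratfun_inverse coeffs comp_apply insertCI range_coeff rangeE)
  then show p: "p = map_poly rep_ratfun p0"
    unfolding p0_def by (metis map_poly_map_poly rep_ratfun.hom_zero abs_ratfun_zero)
  have "rep_ratfun (lead_coeff p0) = rep_ratfun 1"
    using assms by (simp add: p is_min_poly_t_def coeff_map_poly)
  then have "lead_coeff p0 = 1"
    by (simp only: rep_ratfun_inject)
  moreover have "degree p \<le> degree q"
    if "q \<noteq> 0" "poly (map_poly rep_ratfun q) \<beta> = 0" for q
  proof -
    have "coeff (map_poly rep_ratfun q) i \<in> ratfun_t" for i
      by (simp add: coeff_map_poly rep_ratfun)
    then show ?thesis
      using assms that unfolding is_min_poly_t_def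
      by (metis rep_ratfun.degree_map_poly_hom rep_ratfun.map_poly_hom_eq_0_iff)
  qed
  ultimately show "rep_ratfun.minimal_poly p0 \<beta>"
    using assms by (simp add: rep_ratfun.minimal_poly_def is_min_poly_t_def p)
qed

lemma differential_field_hom_rep_ratfun_comp:
  fixes \<phi> :: "'f::field fls \<Rightarrow> 'L::field" and D :: "'L \<Rightarrow> 'L"
  assumes "ratfun_hom \<phi>" and "derivation_extending \<phi> D"
  shows "differential_field_hom (\<phi> \<circ> rep_ratfun) deriv_ratfun D"
proof unfold_locales
  fix x y :: "'f ratfun" and a b :: 'L
  have "\<phi> (rep_ratfun x + rep_ratfun y) = \<phi> (rep_ratfun x) + \<phi> (rep_ratfun y)"
    "\<phi> (rep_ratfun x * rep_ratfun y) = \<phi> (rep_ratfun x) * \<phi> (rep_ratfun y)"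
    using assms(1) rep_ratfun[of x] rep_ratfun[of y] by (simp_all add: ratfun_hom_def)
  then show "(\<phi> \<circ> rep_ratfun) 0 = 0" "(\<phi> \<circ> rep_ratfun) 1 = 1"
    "(\<phi> \<circ> rep_ratfun) (x + y) = (\<phi> \<circ> rep_ratfun) x + (\<phi> \<circ> rep_ratfun) y"
    "(\<phi> \<circ> rep_ratfun) (x * y) = (\<phi> \<circ> rep_ratfun) x * (\<phi> \<circ> rep_ratfun) y"
    using assms(1) by (simp_all add: ratfun_hom_def rep_ratfun.hom_add rep_ratfun.hom_mult)
  show "D (a + b) = D a + D b" "D (a * b) = a * D b + D a * b"
    using assms(2) by (simp_all add: derivation_extending_def)
  show "D ((\<phi> \<circ> rep_ratfun) x) = (\<phi> \<circ> rep_ratfun) (deriv_ratfun x)"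
    using assms(2) rep_ratfun[of x] by (simp add: derivation_extending_def deriv_ratfun.rep_eq)
qed

section \<open>Separability over F(t)\<close>

lemma prime_CHAR_finite_field: "prime CHAR('a::{field,finite})"
  using prime_CHAR_semidom[where ?'a = 'a] finite_imp_CHAR_pos[where ?'a = 'a, OF finite_UNIV] by simp

lemma CHAR_power_surj:
  fixes y :: "'a::{field,finite}"
  obtains x where "y = x ^ CHAR('a)"
proof -
  have "inj (\<lambda>x::'a. x ^ CHAR('a))"
  proof (rule injI)
    fix x z :: 'a
    assume "x ^ CHAR('a) = z ^ CHAR('a)"
    moreover have "(x - z) ^ CHAR('a) = x ^ CHAR('a) - z ^ CHAR('a)"
      using freshmans_dream[OF prime_CHAR_finite_field refl, of x "- z"]
        minus_power_prime_CHAR[OF refl prime_CHAR_finite_field, of z] by simp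
    ultimately show "x = z"
      by simp
  qed
  then have "surj (\<lambda>x::'a. x ^ CHAR('a))"
    by (rule finite_UNIV_inj_surj[OF finite_UNIV])
  then show thesis
    using that by (metis surjD)
qed

lemma ratfun_t_constant_is_CHAR_power:
  fixes c :: "'f::{field,finite} fls"
  assumes "c \<in> ratfun_t" and "deriv_t c = 0"
  obtains e where "e \<in> ratfun_t" "c = e ^ CHAR('f)"
proof -
  define q where "q = CHAR('f)"
  have "prime q"
    unfolding q_def by (rule prime_CHAR_finite_field)
  then have q: "q = Suc (q - 1)"
    using prime_gt_0_nat by fastforce
  obtain P Q where "Q \<noteq> 0" and c: "c = poly_t P / poly_t Q"
    using assms(1) by (rule ratfun_tE)
  define N where "N = P * Q ^ (q - 1)"
  have N: "poly_t N = c * poly_t Q ^ q"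
    using \<open>Q \<noteq> 0\<close> by (subst q) (simp add: N_def c poly_t.hom_mult poly_t.hom_power)
  have "(of_nat q :: 'f fls) = 0"
    using of_nat_CHAR[where ?'a = "'f fls"] by (simp add: q_def)
  then have "deriv_t (poly_t Q ^ q) = 0"
    by (subst q, subst deriv_t.power, subst q[symmetric]) simp
  then have "poly_t (pderiv N) = 0"
    using assms(2) by (simp add: N deriv_t.leibniz flip: deriv_t_poly_t)
  then obtain M where "N = M ^ q"
    using pderiv_eq_0_imp_CHAR_power[of N] prime_CHAR_finite_field CHAR_power_surj
    unfolding q_def by (metis poly_t_eq_0_iff)
  then have "c = (poly_t M / poly_t Q) ^ q"
    using N \<open>Q \<noteq> 0\<close> by (simp add: poly_t.hom_power power_divide)
  then show thesis
    using that ratfun_tI[OF \<open>Q \<noteq> 0\<close>] unfolding q_def by blast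
qed

lemma CHAR_ratfun: "CHAR('f::field ratfun) = CHAR('f)"
  using rep_ratfun.CHAR_eq[where ?'a = 'f] by simp

lemma ratfun_constant_is_CHAR_power:
  fixes c :: "'f::{field,finite} ratfun"
  assumes "deriv_ratfun c = 0"
  shows "\<exists>e. c = e ^ CHAR('f ratfun)"
proof -
  have "deriv_t (rep_ratfun c) = 0"
    using assms by (simp flip: deriv_ratfun.rep_eq)
  then obtain e where "e \<in> ratfun_t" "rep_ratfun c = e ^ CHAR('f)"
    using rep_ratfun by (metis ratfun_t_constant_is_CHAR_power)
  then have "rep_ratfun c = rep_ratfun (abs_ratfun e ^ CHAR('f))"
    by (simp add: rep_ratfun.hom_power abs_ratfun_inverse)
  then show ?thesis
    by (auto simp: rep_ratfun_inject CHAR_ratfun)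
qed

lemma minimal_poly_ratfun_coprime_pderiv:
  fixes p :: "'f::{field,finite} ratfun poly"
  assumes "rep_ratfun.minimal_poly p \<beta>"
  shows "coprime p (pderiv p)"
  using prime_CHAR_finite_field[where ?'a = 'f] ratfun_constant_is_CHAR_power
  by (intro rep_ratfun.minimal_poly_coprime_pderiv[OF assms]
      rep_ratfun.minimal_poly_pderiv_nonzero[OF assms]) (simp_all add: CHAR_ratfun)

theorem mainTheorem7:
  fixes \<beta> :: "'f::{field,finite} fls"
    and d :: nat
    and p :: "'f fls poly"
    and \<phi> :: "'f fls \<Rightarrow> 'L::field"
    and D :: "'L \<Rightarrow> 'L"
  assumes "algebraic_of_degree_t \<beta> d"
    and "is_min_poly_t p \<beta>"
    and "is_splitting_field_t \<phi> p"
    and "derivation_extending \<phi> D"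
  shows "(\<exists>a\<in>ratfun_t. \<exists>b\<in>ratfun_t. \<exists>c\<in>ratfun_t. deriv_t \<beta> = a * \<beta>^2 + b * \<beta> + c)
     \<longleftrightarrow> (\<forall>b1 b2 b3 b4. poly (map_poly \<phi> p) b1 = 0 \<and> poly (map_poly \<phi> p) b2 = 0 \<and>
              poly (map_poly \<phi> p) b3 = 0 \<and> poly (map_poly \<phi> p) b4 = 0 \<and>
              distinct [b1, b2, b3, b4] \<longrightarrow> D (cross_ratio b1 b2 b3 b4) = 0)"
proof -
  \<comment> \<open>The hypothesis \<open>algebraic_of_degree_t \<beta> d\<close> is implied by \<open>is_min_poly_t p \<beta>\<close> and not needed.\<close>
  have hom: "ratfun_hom \<phi>" and splits: "splits (map_poly \<phi> p)"
    using assms(3) by (simp_all add: is_splitting_field_t_def)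
  obtain p0 where p: "p = map_poly rep_ratfun p0" and min: "rep_ratfun.minimal_poly p0 \<beta>"
    using assms(2) by (rule is_min_poly_t_imp_minimal_poly)
  have "coprime p0 (pderiv p0)"
    using min by (rule minimal_poly_ratfun_coprime_pderiv)
  then obtain u where u: "p0 dvd u * pderiv p0 - 1"
    by (rule coprime_imp_unit_mod)
  obtain w where deg_w: "degree w < degree p0"
    and w: "p0 dvd pderiv p0 * w + map_poly deriv_ratfun p0"
    using solve_congruence_with_unit_mod[OF u rep_ratfun.minimal_poly_degree_pos[OF min]] by blast
  interpret \<psi>: differential_field_hom "\<phi> \<circ> rep_ratfun" deriv_ratfun D
    using hom assms(4) by (rule differential_field_hom_rep_ratfun_comp)
  define R where "R = {y. poly (map_poly \<phi> p) y = 0}"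
  have \<phi>p: "map_poly \<phi> p = map_poly (\<phi> \<circ> rep_ratfun) p0"
    using hom by (simp add: p map_poly_map_poly ratfun_hom_def)
  have "deriv_t \<beta> = poly (map_poly rep_ratfun w) \<beta>"
    using rep_ratfun.derivative_at_root[OF u w] rep_ratfun.minimal_polyD(3)[OF min] by blast
  moreover have "D y = poly (map_poly (\<phi> \<circ> rep_ratfun) w) y" if "y \<in> R" for y
    using \<psi>.derivative_at_root[OF u w] that by (simp add: R_def \<phi>p)
  moreover have "card R = degree p0"
    using \<psi>.card_roots_map_poly_separable[OF _ rep_ratfun.minimal_polyD(1)[OF min] u] splits
    by (simp add: R_def \<phi>p)
  ultimately show ?thesis
    using rep_ratfun.minimal_poly_quadratic_iff[OF min deg_w]
      \<psi>.target.cross_ratios_const_iff_degree_le_2[of "map_poly (\<phi> \<circ> rep_ratfun) w" R] deg_w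
    by (simp add: range_rep_ratfun R_def)
qed

end
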